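(* Let $p\in[1,\infty)$, $s>1+\frac1p$, and let $u_0$ be the function defined below. Set $\lambda_n=\frac{11}{8}2^n$ and $t_n=\frac{8}{11}\pi n2^{-n}$. Then there is a constant $C$ such that for all sufficiently large $n\in\mathbb{N}^+$ and all $t\in[0,1]$, $$\|\phi(x-tu_0(x))\|_{L^p(\mathbb{R})}\le C,\qquad \|\cos(\lambda_n(x-t_nu_0(x)))\|_{L^p([0,2\pi])}\ge\frac14 .$$
   Context: Let $\widehat\phi\in C_c^\infty(\mathbb{R})$ be even, real-valued, with values in $[0,1]$, $\widehat\phi(\xi)=1$ for $|\xi|\le1/4$ and $\widehat\phi(\xi)=0$ for $|\xi|\ge1/2$, and let $\phi$ be the real-valued Schwartz function whose Fourier transform is a positive constant multiple of $\widehat\phi$ (so $\|\phi\|_{L^\infty}=\phi(0)>0$). Let $\gamma(s)=2^{2s}(2^s-1)$, $\tilde\phi(x)=\gamma(s)\phi(x)/\phi(0)$, and $$u_0(x)=\sum_{j=3}^\infty2^{-js}\tilde\phi(x)\cos\Big(\tfrac{11}{8}2^jx\Big),\qquad x\in\mathbb{R}.$$ *)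

theory Defs
  imports "HOL-Analysis.Analysis"
begin

definition smooth_R :: "(real \<Rightarrow> real) \<Rightarrow> bool" where
  "smooth_R f \<longleftrightarrow> (\<forall>k x. ((deriv ^^ k) f) differentiable (at x))"

definition admissible_bump :: "(real \<Rightarrow> real) \<Rightarrow> bool" where
  "admissible_bump ph \<longleftrightarrow> smooth_R ph \<and> (\<forall>\<xi>. ph (-\<xi>) = ph \<xi>)
     \<and> (\<forall>\<xi>. 0 \<le> ph \<xi> \<and> ph \<xi> \<le> 1)
     \<and> (\<forall>\<xi>. \<bar>\<xi>\<bar> \<le> 1/4 \<longrightarrow> ph \<xi> = 1)
     \<and> (\<forall>\<xi>. \<bar>\<xi>\<bar> \<ge> 1/2 \<longrightarrow> ph \<xi> = 0)"

text \<open>The function phi whose Fourier transform (convention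
  hat f(xi) = int f(x) e^{-i x xi} dx) is a positive multiple of ph:
  phi(x) = c * int ph(xi) e^{i x xi} dxi = c * int ph(xi) cos(x xi) dxi (ph even).\<close>
definition phi_of :: "real \<Rightarrow> (real \<Rightarrow> real) \<Rightarrow> real \<Rightarrow> real" where
  "phi_of c ph x = c * (\<integral>\<xi>. ph \<xi> * cos (\<xi> * x) \<partial>lborel)"

definition gamma_s :: "real \<Rightarrow> real" where
  "gamma_s s = 2 powr (2 * s) * (2 powr s - 1)"

definition u0_of :: "real \<Rightarrow> (real \<Rightarrow> real) \<Rightarrow> real \<Rightarrow> real" where
  "u0_of s phi x =
     (\<Sum>j. 2 powr (- real (j + 3) * s) * (gamma_s s * phi x / phi 0)
            * cos (11 / 8 * 2 ^ (j + 3) * x))"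

definition Lp_norm :: "real measure \<Rightarrow> real \<Rightarrow> (real \<Rightarrow> real) \<Rightarrow> ereal" where
  "Lp_norm M p f =
     (let I = (\<integral>\<^sup>+ x. ennreal (\<bar>f x\<bar> powr p) \<partial>M)
      in if I = \<infinity> then \<infinity> else ereal (enn2real I powr (1 / p)))"

end

theory Submission
  imports Defs "HOL-Probability.Sinc_Integral" "HOL-Real_Asymp.Real_Asymp"
begin

(* Integrating the Fourier representation of phi by parts twice shows that phi is bounded with
   quadratic decay; since s > 0 the profile u0 is bounded, and a bounded shift changes 1 + x^2 by at
   most a constant factor, so |phi (x - t u0 x)|^p is dominated uniformly in t by a multiple of
   1 / (1 + x^2).

   Since s > 1 the profile u0 is moreover Lipschitz, say with constant L. The phase
   theta = lambda_n (x - t_n u0 x) then deviates from the linear phase lambda_n x by a function whose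
   Lipschitz constant lambda_n t_n L = pi n L is negligible against lambda_n: pairing x with
   x + pi / (2 lambda_n) shows that the integral of cos (2 theta) over [0, 2 pi] is O(n 2^-n), and the
   pointwise minorant |cos theta|^p >= 2^-p (1 + 2 cos (2 theta)) / 3 bounds the L^p norm of
   cos theta from below by 1/2. *)

lemma abs_cos_diff_le: "\<bar>cos a - cos b\<bar> \<le> \<bar>a - b :: real\<bar>"
proof -
  have "\<bar>cos a - cos b\<bar> = 2 * \<bar>sin ((a + b) / 2)\<bar> * \<bar>sin ((b - a) / 2)\<bar>"
    by (simp add: cos_diff_cos abs_mult)
  also have "\<dots> \<le> 2 * 1 * \<bar>(b - a) / 2\<bar>"
    by (intro mult_mono abs_sin_x_le_abs_x) auto
  finally show ?thesis by simp
qed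

lemma lipschitz_on_cos: "1-lipschitz_on U (cos :: real \<Rightarrow> real)"
  by (rule lipschitz_onI) (simp_all add: dist_real_def abs_cos_diff_le)

lemma abs_integral_cos_minus_lipschitz_le:
  fixes \<psi> :: "real \<Rightarrow> real"
  assumes \<omega>: "\<omega> > 0" and ab: "a \<le> b" and lip: "K-lipschitz_on UNIV \<psi>"
  shows "\<bar>integral {a..b} (\<lambda>x. cos (\<omega> * x - \<psi> x))\<bar> \<le> (K * (b - a) / 2 + 1) * (pi / \<omega>)"
proof -
  define d where "d = pi / \<omega>"
  define G where "G x = cos (\<omega> * x - \<psi> x)" for x
  have d: "d > 0" using \<omega> by (simp add: d_def)
  have cUNIV: "continuous_on UNIV G"
    unfolding G_def by (intro continuous_intros lipschitz_on_continuous_on[OF lip])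
  then have cG: "continuous_on S G" for S
    by (rule continuous_on_subset) simp
  have cGd: "continuous_on S (\<lambda>x. G (x + d))" for S
    by (rule continuous_on_compose2[OF cUNIV]) (auto intro!: continuous_intros)
  have iG: "G integrable_on {u..v}" for u v by (rule integrable_continuous_interval[OF cG])
  \<comment> \<open>a shift by half a period flips the sign of the carrier \<open>cos (\<omega> x)\<close>\<close>
  have pair: "\<bar>G x + G (x + d)\<bar> \<le> K * d" for x
  proof -
    have "G (x + d) = cos ((\<omega> * x - \<psi> (x + d)) + pi)"
      unfolding G_def using \<omega> by (simp add: d_def algebra_simps)
    then have "\<bar>G x + G (x + d)\<bar> = \<bar>cos (\<omega> * x - \<psi> x) - cos (\<omega> * x - \<psi> (x + d))\<bar>"
      by (simp add: G_def)
    also have "\<dots> \<le> \<bar>\<psi> (x + d) - \<psi> x\<bar>"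
      using abs_cos_diff_le[of "\<omega> * x - \<psi> x" "\<omega> * x - \<psi> (x + d)"] by (simp add: abs_minus_commute)
    also have "\<dots> \<le> K * d" using lipschitz_onD[OF lip, of "x + d" x] d by (simp add: dist_real_def)
    finally show ?thesis .
  qed
  have "integral {a..b} (\<lambda>x. G (x + d)) = integral {a + d..b + d} G"
    using integral_shift_Icc_real[of a b G d] by (simp add: o_def add.commute)
  moreover have "integral {a..a + d} G + integral {a + d..b + d} G = integral {a..b + d} G"
    using ab d by (intro Henstock_Kurzweil_Integration.integral_combine iG) auto
  moreover have "integral {a..b} G + integral {b..b + d} G = integral {a..b + d} G"
    using ab d by (intro Henstock_Kurzweil_Integration.integral_combine iG) auto
  moreover have "integral {a..b} (\<lambda>x. G x + G (x + d)) = integral {a..b} G + integral {a..b} (\<lambda>x. G (x + d))"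
    by (intro integral_add iG integrable_continuous_interval cGd)
  ultimately have "2 * integral {a..b} G
      = integral {a..b} (\<lambda>x. G x + G (x + d)) + integral {a..a + d} G - integral {b..b + d} G"
    by linarith
  moreover have "\<bar>integral {a..b} (\<lambda>x. G x + G (x + d))\<bar> \<le> K * d * (b - a)"
    using integral_bound[of a b "\<lambda>x. G x + G (x + d)" "K * d"] ab pair
    by (simp add: continuous_on_add cG cGd)
  moreover have "\<bar>integral {u..u + d} G\<bar> \<le> d" for u
    using integral_bound[of u "u + d" G 1] d cG by (simp add: G_def)
  ultimately have "\<bar>2 * integral {a..b} G\<bar> \<le> K * d * (b - a) + 2 * d"
    by (smt (verit))
  then have "\<bar>integral {a..b} G\<bar> \<le> (K * (b - a) / 2 + 1) * d"
    by (simp add: abs_mult field_simps)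
  then show ?thesis by (simp add: G_def[abs_def] d_def)
qed

lemma Lp_norm_ge:
  assumes p: "p > 0" and Q: "Q \<ge> 0"
    and le: "ennreal Q \<le> (\<integral>\<^sup>+ x. ennreal (\<bar>f x\<bar> powr p) \<partial>M)"
  shows "ereal (Q powr (1 / p)) \<le> Lp_norm M p f"
proof (cases "(\<integral>\<^sup>+ x. ennreal (\<bar>f x\<bar> powr p) \<partial>M) = \<infinity>")
  case True
  then show ?thesis by (simp add: Lp_norm_def)
next
  case False
  then have "Q \<le> enn2real (\<integral>\<^sup>+ x. ennreal (\<bar>f x\<bar> powr p) \<partial>M)"
    using enn2real_mono[OF le] False Q by (simp add: top.not_eq_extremum)
  then have "Q powr (1 / p) \<le> enn2real (\<integral>\<^sup>+ x. ennreal (\<bar>f x\<bar> powr p) \<partial>M) powr (1 / p)"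
    using p Q by (intro powr_mono2) auto
  then show ?thesis using False by (simp add: Lp_norm_def)
qed

lemma Lp_norm_le:
  assumes p: "p > 0" and Q: "Q \<ge> 0"
    and le: "(\<integral>\<^sup>+ x. ennreal (\<bar>f x\<bar> powr p) \<partial>M) \<le> ennreal Q"
  shows "Lp_norm M p f \<le> ereal (Q powr (1 / p))"
proof -
  have fin: "(\<integral>\<^sup>+ x. ennreal (\<bar>f x\<bar> powr p) \<partial>M) \<noteq> \<infinity>"
    using le by (auto simp: top_unique)
  have "enn2real (\<integral>\<^sup>+ x. ennreal (\<bar>f x\<bar> powr p) \<partial>M) \<le> Q"
    using enn2real_mono[OF le] Q by simp
  then have "enn2real (\<integral>\<^sup>+ x. ennreal (\<bar>f x\<bar> powr p) \<partial>M) powr (1 / p) \<le> Q powr (1 / p)"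
    using p by (intro powr_mono2) auto
  then show ?thesis using fin by (simp add: Lp_norm_def)
qed

lemma powr_ge_quadratic_minorant:
  fixes a p :: real
  assumes a: "0 \<le> a" "a \<le> 1" and p: "0 \<le> p"
  shows "2 powr (- p) * ((4 * a\<^sup>2 - 1) / 3) \<le> a powr p"
proof (cases "a < 1 / 2")
  case True
  then have "a\<^sup>2 \<le> (1 / 2)\<^sup>2" using a by (intro power_mono) auto
  then have "2 powr (- p) * ((4 * a\<^sup>2 - 1) / 3) \<le> 0"
    by (intro mult_nonneg_nonpos) (auto simp: power2_eq_square)
  then show ?thesis by (smt (verit) powr_ge_zero)
next
  case False
  have "a\<^sup>2 \<le> 1" using a by (simp add: power_le_one)
  then have "2 powr (- p) * ((4 * a\<^sup>2 - 1) / 3) \<le> 2 powr (- p) * 1"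
    by (intro mult_left_mono) auto
  also have "\<dots> = (1 / 2) powr p" by (simp add: powr_minus_divide powr_divide)
  also have "\<dots> \<le> a powr p" using False p by (intro powr_mono2) auto
  finally show ?thesis .
qed

lemma Lp_norm_cos_ge_half:
  fixes \<theta> :: "real \<Rightarrow> real"
  assumes p: "p > 0" and c\<theta>: "continuous_on {0..2 * pi} \<theta>"
    and small: "\<bar>integral {0..2 * pi} (\<lambda>x. cos (2 * \<theta> x))\<bar> \<le> pi / 2"
  shows "ereal (1 / 2) \<le> Lp_norm (restrict_space lborel {0..2 * pi}) p (\<lambda>x. cos (\<theta> x))"
proof -
  define q where "q x = 2 powr (- p) * ((1 + 2 * cos (2 * \<theta> x)) / 3)" for x
  define g where "g x = max 0 (q x)" for x
  have cq: "continuous_on {0..2 * pi} q"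
    unfolding q_def by (intro continuous_intros c\<theta>) auto
  then have g_int: "g integrable_on {0..2 * pi}"
    unfolding g_def by (intro integrable_continuous_interval continuous_intros)
  have g_le: "g x \<le> \<bar>cos (\<theta> x)\<bar> powr p" for x
  proof -
    have "q x = 2 powr (- p) * ((4 * \<bar>cos (\<theta> x)\<bar>\<^sup>2 - 1) / 3)"
      by (simp add: q_def cos_double_cos)
    then show ?thesis
      using powr_ge_quadratic_minorant[of "\<bar>cos (\<theta> x)\<bar>" p] p by (simp add: g_def)
  qed
  define I where "I = integral {0..2 * pi} (\<lambda>x. cos (2 * \<theta> x))"
  have one: "((\<lambda>x. 1) has_integral 2 * pi) {0..2 * pi}"
    using has_integral_const_real[of "1 :: real" 0 "2 * pi"] by simp
  have "(q has_integral 2 powr (- p) * ((2 * pi + 2 * I) / 3)) {0..2 * pi}"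
    unfolding q_def I_def
    by (intro has_integral_mult_right has_integral_divide has_integral_add one integrable_integral
        integrable_continuous_interval continuous_intros c\<theta>)
  then have "2 powr (- p) * ((2 * pi + 2 * I) / 3) \<le> integral {0..2 * pi} g"
    by (rule has_integral_le[OF _ integrable_integral[OF g_int]])
      (auto simp: g_def)
  moreover have "2 powr (- p) \<le> 2 powr (- p) * ((2 * pi + 2 * I) / 3)"
    using small pi_gt3 by (simp add: I_def abs_le_iff)
  ultimately have "ennreal (2 powr (- p)) \<le> ennreal (integral {0..2 * pi} g)"
    by (intro ennreal_leI) linarith
  also have "\<dots> = (\<integral>\<^sup>+ x. ennreal (g x) * indicator {0..2 * pi} x \<partial>lborel)"
    by (rule nn_integral_has_integral_lebesgue'[OF _ integrable_integral[OF g_int], symmetric])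
      (simp add: g_def)
  also have "\<dots> \<le> (\<integral>\<^sup>+ x. ennreal (\<bar>cos (\<theta> x)\<bar> powr p) * indicator {0..2 * pi} x \<partial>lborel)"
    by (intro nn_integral_mono mult_right_mono ennreal_leI g_le) simp
  also have "\<dots> = (\<integral>\<^sup>+ x. ennreal (\<bar>cos (\<theta> x)\<bar> powr p) \<partial>restrict_space lborel {0..2 * pi})"
    by (rule nn_integral_restrict_space[symmetric]) simp
  finally have "ereal ((2 powr (- p)) powr (1 / p)) \<le> Lp_norm (restrict_space lborel {0..2 * pi}) p (\<lambda>x. cos (\<theta> x))"
    by (intro Lp_norm_ge p) simp_all
  moreover have "(2 powr (- p)) powr (1 / p) = 1 / 2"
  proof -
    have "(2 powr (- p)) powr (1 / p) = 2 powr (- p * (1 / p))" by (rule powr_powr)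
    also have "- p * (1 / p) = - 1" using p by simp
    finally show ?thesis by (simp add: powr_minus)
  qed
  ultimately show ?thesis by (simp only:)
qed

lemma Lp_norm_cos_phase_ge_half:
  fixes u :: "real \<Rightarrow> real"
  assumes p: "p > 0" and k: "k > 0" and lip: "L-lipschitz_on UNIV u"
    and small: "pi * \<bar>\<tau>\<bar> * L + 1 / (2 * k) \<le> 1 / 2"
  shows "ereal (1 / 2) \<le> Lp_norm (restrict_space lborel {0..2 * pi}) p (\<lambda>x. cos (k * (x - \<tau> * u x)))"
proof (rule Lp_norm_cos_ge_half[OF p])
  show "continuous_on {0..2 * pi} (\<lambda>x. k * (x - \<tau> * u x))"
    by (intro continuous_intros continuous_on_subset[OF lipschitz_on_continuous_on[OF lip]]) simp
  have "(\<bar>2 * k * \<tau>\<bar> * L)-lipschitz_on UNIV (\<lambda>x. 2 * k * \<tau> * u x)"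
    by (rule lipschitz_on_cmult_real[OF lip])
  then have "\<bar>integral {0..2 * pi} (\<lambda>x. cos (2 * k * x - 2 * k * \<tau> * u x))\<bar>
      \<le> (\<bar>2 * k * \<tau>\<bar> * L * (2 * pi - 0) / 2 + 1) * (pi / (2 * k))"
    using k by (intro abs_integral_cos_minus_lipschitz_le) auto
  also have "\<dots> = pi * (pi * \<bar>\<tau>\<bar> * L + 1 / (2 * k))"
    using k by (simp add: abs_mult field_simps)
  also have "\<dots> \<le> pi / 2"
    using small by (simp add: mult_left_mono)
  finally show "\<bar>integral {0..2 * pi} (\<lambda>x. cos (2 * (k * (x - \<tau> * u x))))\<bar> \<le> pi / 2"
    by (simp add: algebra_simps)
qed

lemma one_plus_square_le_shift:
  fixes x h M :: real
  assumes "\<bar>h\<bar> \<le> M"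
  shows "1 + x\<^sup>2 \<le> 2 * (1 + M\<^sup>2) * (1 + (x - h)\<^sup>2)"
proof -
  have "h\<^sup>2 \<le> M\<^sup>2" using assms by (metis abs_ge_zero power2_abs power_mono)
  moreover have "x\<^sup>2 + (x - 2 * h)\<^sup>2 = 2 * (x - h)\<^sup>2 + 2 * h\<^sup>2"
    by (simp add: power2_eq_square algebra_simps)
  moreover have "2 * (1 + M\<^sup>2) * (1 + (x - h)\<^sup>2) = 2 + 2 * M\<^sup>2 + 2 * (x - h)\<^sup>2 + 2 * (M\<^sup>2 * (x - h)\<^sup>2)"
    by (simp add: algebra_simps)
  moreover have "0 \<le> (x - 2 * h)\<^sup>2" "0 \<le> M\<^sup>2 * (x - h)\<^sup>2" by simp_all
  ultimately show ?thesis by linarith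
qed

lemma nn_integral_inverse_1_plus_square:
  "(\<integral>\<^sup>+ x. ennreal (K * inverse (1 + x\<^sup>2)) \<partial>lborel) = ennreal (K * pi)" if "K \<ge> 0"
proof -
  have "integrable lborel (\<lambda>x::real. inverse (1 + x\<^sup>2))"
    using integrable_inverse_1_plus_square by (simp add: set_integrable_def einterval_eq_UNIV)
  moreover have "(\<integral>x. inverse (1 + x\<^sup>2) \<partial>lborel) = pi"
    using LBINT_inverse_1_plus_square
    by (simp add: interval_lebesgue_integral_def set_lebesgue_integral_def einterval_eq_UNIV)
  ultimately show ?thesis
    using that by (subst nn_integral_eq_integral) auto
qed

lemma Lp_norm_shift_le:
  fixes \<Phi> v :: "real \<Rightarrow> real"
  assumes p: "p \<ge> 1" and bound: "\<And>y. \<bar>\<Phi> y\<bar> \<le> P"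
    and decay: "\<And>y. \<bar>\<Phi> y\<bar> * (1 + y\<^sup>2) \<le> A" and shift: "\<And>x. \<bar>v x\<bar> \<le> M"
  shows "Lp_norm lborel p (\<lambda>x. \<Phi> (x - v x))
    \<le> ereal ((2 * P powr (p - 1) * A * (1 + M\<^sup>2) * pi) powr (1 / p))"
proof -
  define K where "K = 2 * P powr (p - 1) * A * (1 + M\<^sup>2)"
  have A: "A \<ge> 0" using decay[of 0] by (smt (verit) abs_ge_zero mult_nonneg_nonneg zero_le_power2)
  then have K: "K \<ge> 0" by (simp add: K_def)
  have pointwise: "\<bar>\<Phi> (x - v x)\<bar> powr p \<le> K * inverse (1 + x\<^sup>2)" for x
  proof -
    define y where "y = x - v x"
    define a where "a = \<bar>\<Phi> y\<bar>"
    have a: "0 \<le> a" "a \<le> P" using bound[of y] by (auto simp: a_def)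
    have "a powr p = a powr (p - 1) * a powr 1"
      by (subst powr_add[symmetric]) simp
    also have "\<dots> = a powr (p - 1) * a"
      using a by simp
    also have "\<dots> \<le> P powr (p - 1) * a" using a p by (intro mult_right_mono powr_mono2) auto
    also have "\<dots> \<le> P powr (p - 1) * (A * inverse (1 + y\<^sup>2))"
      using decay[of y] by (intro mult_left_mono) (auto simp: a_def field_simps add_pos_nonneg)
    also have "\<dots> \<le> P powr (p - 1) * (A * (2 * (1 + M\<^sup>2) * inverse (1 + x\<^sup>2)))"
      using one_plus_square_le_shift[OF shift, of x] A
      by (intro mult_left_mono) (auto simp: y_def field_simps add_pos_nonneg)
    finally show ?thesis by (simp add: a_def y_def K_def algebra_simps)
  qed
  have "(\<integral>\<^sup>+ x. ennreal (\<bar>\<Phi> (x - v x)\<bar> powr p) \<partial>lborel) \<le> (\<integral>\<^sup>+ x. ennreal (K * inverse (1 + x\<^sup>2)) \<partial>lborel)"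
    by (intro nn_integral_mono ennreal_leI pointwise)
  then show ?thesis
    using K p by (intro Lp_norm_le) (auto simp: nn_integral_inverse_1_plus_square K_def)
qed

lemma integral_mult_cos_decay:
  fixes f f' f'' :: "real \<Rightarrow> real"
  assumes ab: "a \<le> b"
    and f': "\<And>x. (f has_real_derivative f' x) (at x)"
    and f'': "\<And>x. (f' has_real_derivative f'' x) (at x)"
    and boundary: "f a = 0" "f b = 0" "f' a = 0" "f' b = 0"
    and B: "\<And>x. x \<in> {a..b} \<Longrightarrow> \<bar>f'' x\<bar> \<le> B"
  shows "\<bar>integral {a..b} (\<lambda>\<xi>. f \<xi> * cos (\<xi> * y))\<bar> * y\<^sup>2 \<le> B * (b - a)"
proof (cases "y = 0")
  case True
  then show ?thesis using B[of a] ab by simp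
next
  case y: False
  define I where "I = integral {a..b} (\<lambda>\<xi>. f \<xi> * cos (\<xi> * y))"
  \<comment> \<open>an antiderivative of \<open>f \<xi> cos (\<xi> y)\<close> modulo \<open>f'' \<xi> cos (\<xi> y) / y\<^sup>2\<close>, i.e. integration by parts twice\<close>
  define F where "F \<xi> = f \<xi> * sin (\<xi> * y) / y + f' \<xi> * cos (\<xi> * y) / y\<^sup>2" for \<xi>
  have ftc: "((\<lambda>\<xi>. f \<xi> * cos (\<xi> * y) + f'' \<xi> * cos (\<xi> * y) / y\<^sup>2) has_integral F b - F a) {a..b}"
  proof (rule fundamental_theorem_of_calculus[OF ab])
    fix x
    have "((\<lambda>\<xi>. f \<xi> * sin (\<xi> * y)) has_real_derivative f' x * sin (x * y) + f x * (cos (x * y) * y)) (at x)"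
      by (auto intro!: derivative_eq_intros f')
    moreover have "((\<lambda>\<xi>. f' \<xi> * cos (\<xi> * y)) has_real_derivative f'' x * cos (x * y) - f' x * (sin (x * y) * y)) (at x)"
      by (auto intro!: derivative_eq_intros f'')
    ultimately have "(F has_real_derivative
        (f' x * sin (x * y) + f x * (cos (x * y) * y)) / y
        + (f'' x * cos (x * y) - f' x * (sin (x * y) * y)) / y\<^sup>2) (at x)"
      unfolding F_def by (intro DERIV_add DERIV_cdivide)
    also have "(f' x * sin (x * y) + f x * (cos (x * y) * y)) / y
        + (f'' x * cos (x * y) - f' x * (sin (x * y) * y)) / y\<^sup>2
      = f x * cos (x * y) + f'' x * cos (x * y) / y\<^sup>2"
      using y by (simp add: field_simps power2_eq_square)
    finally show "(F has_vector_derivative f x * cos (x * y) + f'' x * cos (x * y) / y\<^sup>2) (at x within {a..b})"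
      by (simp add: has_real_derivative_iff_has_vector_derivative has_vector_derivative_at_within)
  qed
  have Iint: "((\<lambda>\<xi>. f \<xi> * cos (\<xi> * y)) has_integral I) {a..b}"
    unfolding I_def using DERIV_isCont[OF f']
    by (intro integrable_integral integrable_continuous_interval continuous_intros
        continuous_at_imp_continuous_on) auto
  have "F a = 0" "F b = 0" using boundary by (simp_all add: F_def)
  then have "((\<lambda>\<xi>. f'' \<xi> * cos (\<xi> * y) / y\<^sup>2) has_integral - I) {a..b}"
    using has_integral_diff[OF ftc Iint] by simp
  from has_integral_mult_left[OF this, of "y\<^sup>2"]
  have hint: "((\<lambda>\<xi>. f'' \<xi> * cos (\<xi> * y)) has_integral - I * y\<^sup>2) (cbox a b)"
    using y by simp
  have bound: "norm (f'' \<xi> * cos (\<xi> * y)) \<le> B" if "\<xi> \<in> cbox a b" for \<xi>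
  proof -
    have "\<bar>f'' \<xi> * cos (\<xi> * y)\<bar> \<le> \<bar>f'' \<xi>\<bar>" by (simp add: abs_mult mult_left_le)
    then show ?thesis using B[of \<xi>] that by simp
  qed
  have "0 \<le> B" using B[of a] ab by simp
  from has_integral_bound[OF this hint bound] show ?thesis
    using ab by (simp add: I_def abs_mult)
qed

lemma admissible_bump_derivatives:
  assumes "admissible_bump ph"
  shows "(ph has_real_derivative deriv ph x) (at x)"
    and "(deriv ph has_real_derivative deriv (deriv ph) x) (at x)"
    and "continuous_on S (deriv (deriv ph))"
proof -
  have d: "((deriv ^^ k) ph) differentiable (at x)" for k x
    using assms by (simp add: admissible_bump_def smooth_R_def)
  show "(ph has_real_derivative deriv ph x) (at x)"
    using d[of 0 x] by (simp add: DERIV_deriv_iff_real_differentiable)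
  show "(deriv ph has_real_derivative deriv (deriv ph) x) (at x)"
    using d[of 1 x] by (simp add: DERIV_deriv_iff_real_differentiable)
  show "continuous_on S (deriv (deriv ph))"
    using d[of 2] by (simp add: numeral_2_eq_2 continuous_at_imp_continuous_on differentiable_imp_continuous_within)
qed

lemma admissible_bump_continuous_on: "admissible_bump ph \<Longrightarrow> continuous_on S ph"
  using DERIV_isCont[OF admissible_bump_derivatives(1)] by (simp add: continuous_at_imp_continuous_on)

lemma admissible_bump_eq_0: "admissible_bump ph \<Longrightarrow> 1 / 2 \<le> \<bar>x\<bar> \<Longrightarrow> ph x = 0"
  by (simp add: admissible_bump_def)

lemma admissible_bump_deriv_eq_0:
  assumes "admissible_bump ph" and "\<bar>x\<bar> > 1 / 2"
  shows "deriv ph x = 0"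
proof -
  have "open {t :: real. \<bar>t\<bar> > 1 / 2}"
    by (intro open_Collect_less continuous_intros)
  then have "eventually (\<lambda>t. t \<in> {t. \<bar>t\<bar> > 1 / 2}) (nhds x)"
    using assms(2) by (intro eventually_nhds_in_open) auto
  then have "eventually (\<lambda>t. ph t = 0) (nhds x)"
    by (rule eventually_mono) (simp add: admissible_bump_eq_0[OF assms(1)])
  then have "deriv ph x = deriv (\<lambda>_. 0) x" by (rule deriv_cong_ev) simp
  then show ?thesis by simp
qed

lemma phi_of_eq_integral:
  assumes adm: "admissible_bump ph"
  shows "phi_of c ph x = c * integral {-1..1} (\<lambda>\<xi>. ph \<xi> * cos (\<xi> * x))"
proof -
  have cont: "continuous_on {-1..1} (\<lambda>\<xi>. ph \<xi> * cos (\<xi> * x))"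
    by (intro continuous_intros admissible_bump_continuous_on[OF adm])
  have "(\<lambda>\<xi>. ph \<xi> * cos (\<xi> * x)) = (\<lambda>\<xi>. indicator {-1..1} \<xi> *\<^sub>R (ph \<xi> * cos (\<xi> * x)))"
    by (auto simp: indicator_def fun_eq_iff intro!: admissible_bump_eq_0[OF adm])
  then have "(\<integral>\<xi>. ph \<xi> * cos (\<xi> * x) \<partial>lborel) = (LINT \<xi>:{-1..1}|lborel. ph \<xi> * cos (\<xi> * x))"
    unfolding set_lebesgue_integral_def by (rule arg_cong)
  also have "\<dots> = integral {-1..1} (\<lambda>\<xi>. ph \<xi> * cos (\<xi> * x))"
    by (intro set_borel_integral_eq_integral(2))
      (unfold set_integrable_def, rule borel_integrable_compact[OF compact_Icc cont])
  finally show ?thesis by (simp add: phi_of_def)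
qed

lemma abs_phi_of_le:
  assumes adm: "admissible_bump ph" and c: "c \<ge> 0"
  shows "\<bar>phi_of c ph x\<bar> \<le> phi_of c ph 0"
proof -
  have "norm (integral {-1..1} (\<lambda>\<xi>. ph \<xi> * cos (\<xi> * x))) \<le> integral {-1..1} ph"
    using adm
    by (intro Henstock_Kurzweil_Integration.integral_norm_bound_integral integrable_continuous_interval
        continuous_intros admissible_bump_continuous_on)
      (auto simp: admissible_bump_def abs_mult mult_left_le)
  then show ?thesis
    using c by (simp add: phi_of_eq_integral[OF adm] abs_mult mult_left_mono)
qed

lemma lipschitz_phi_of:
  assumes adm: "admissible_bump ph" and c: "c \<ge> 0"
  shows "(phi_of c ph 0)-lipschitz_on UNIV (phi_of c ph)"
proof (rule lipschitz_onI)
  show "0 \<le> phi_of c ph 0" using abs_phi_of_le[OF assms, of 0] by simp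
  fix x y :: real
  have int: "(\<lambda>\<xi>. ph \<xi> * g \<xi>) integrable_on {-1..1}" if "continuous_on {-1..1} g" for g
    by (intro integrable_continuous_interval continuous_intros admissible_bump_continuous_on[OF adm] that)
  have pointwise: "norm (ph \<xi> * cos (\<xi> * x) - ph \<xi> * cos (\<xi> * y)) \<le> ph \<xi> * \<bar>x - y\<bar>"
    if "\<xi> \<in> {-1..1}" for \<xi>
  proof -
    have "\<bar>cos (\<xi> * x) - cos (\<xi> * y)\<bar> \<le> \<bar>\<xi>\<bar> * \<bar>x - y\<bar>"
      using abs_cos_diff_le[of "\<xi> * x" "\<xi> * y"] by (simp add: abs_mult flip: right_diff_distrib)
    also have "\<dots> \<le> \<bar>x - y\<bar>" using that by (intro mult_left_le_one_le) auto
    finally show ?thesis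
      using adm by (simp add: admissible_bump_def abs_mult mult_left_mono flip: right_diff_distrib)
  qed
  have "\<bar>integral {-1..1} (\<lambda>\<xi>. ph \<xi> * cos (\<xi> * x)) - integral {-1..1} (\<lambda>\<xi>. ph \<xi> * cos (\<xi> * y))\<bar>
      = norm (integral {-1..1} (\<lambda>\<xi>. ph \<xi> * cos (\<xi> * x) - ph \<xi> * cos (\<xi> * y)))"
    by (simp add: integral_diff int continuous_intros)
  also have "\<dots> \<le> integral {-1..1} (\<lambda>\<xi>. ph \<xi> * \<bar>x - y\<bar>)"
    by (intro Henstock_Kurzweil_Integration.integral_norm_bound_integral pointwise int
        integrable_diff continuous_intros) auto
  also have "\<dots> = integral {-1..1} ph * \<bar>x - y\<bar>" by simp
  finally have "c * \<bar>integral {-1..1} (\<lambda>\<xi>. ph \<xi> * cos (\<xi> * x)) - integral {-1..1} (\<lambda>\<xi>. ph \<xi> * cos (\<xi> * y))\<bar>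
      \<le> c * (integral {-1..1} ph * \<bar>x - y\<bar>)"
    using c by (rule mult_left_mono)
  then show "dist (phi_of c ph x) (phi_of c ph y) \<le> phi_of c ph 0 * dist x y"
    using c by (simp add: dist_real_def phi_of_eq_integral[OF adm] abs_mult mult.assoc flip: right_diff_distrib)
qed

lemma phi_of_decay:
  assumes adm: "admissible_bump ph" and c: "c \<ge> 0"
  shows "\<exists>A. \<forall>y. \<bar>phi_of c ph y\<bar> * (1 + y\<^sup>2) \<le> A"
proof -
  obtain B where B: "\<And>x. x \<in> {-1..1} \<Longrightarrow> \<bar>deriv (deriv ph) x\<bar> \<le> B"
    using continuous_on_compact_bound[OF compact_Icc admissible_bump_derivatives(3)[OF adm]]
    by (metis real_norm_def)
  have "\<bar>phi_of c ph y\<bar> * (1 + y\<^sup>2) \<le> phi_of c ph 0 + c * (B * 2)" for y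
  proof -
    have "\<bar>integral {-1..1} (\<lambda>\<xi>. ph \<xi> * cos (\<xi> * y))\<bar> * y\<^sup>2 \<le> B * (1 - (-1))"
      by (rule integral_mult_cos_decay[OF _ admissible_bump_derivatives(1,2)[OF adm] _ _ _ _ B])
        (simp_all add: admissible_bump_eq_0[OF adm] admissible_bump_deriv_eq_0[OF adm])
    then have "\<bar>phi_of c ph y\<bar> * y\<^sup>2 \<le> c * (B * 2)"
      using c by (simp add: phi_of_eq_integral[OF adm] abs_mult mult.assoc mult_left_mono)
    then show ?thesis
      using abs_phi_of_le[OF adm c, of y] by (simp add: algebra_simps)
  qed
  then show ?thesis by blast
qed

lemma lipschitz_on_mult_bounded:
  fixes f g :: "'a::metric_space \<Rightarrow> real"
  assumes f: "K-lipschitz_on U f" and g: "L-lipschitz_on U g"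
    and A: "0 \<le> A" "\<And>x. x \<in> U \<Longrightarrow> \<bar>f x\<bar> \<le> A"
    and B: "0 \<le> B" "\<And>x. x \<in> U \<Longrightarrow> \<bar>g x\<bar> \<le> B"
  shows "(A * L + B * K)-lipschitz_on U (\<lambda>x. f x * g x)"
proof (rule lipschitz_onI)
  show "0 \<le> A * L + B * K"
    using A B lipschitz_on_nonneg[OF f] lipschitz_on_nonneg[OF g] by simp
  fix x y assume xy: "x \<in> U" "y \<in> U"
  have "\<bar>f x * g x - f y * g y\<bar> = \<bar>f x * (g x - g y) + (f x - f y) * g y\<bar>"
    by (simp add: algebra_simps)
  also have "\<dots> \<le> \<bar>f x\<bar> * \<bar>g x - g y\<bar> + \<bar>f x - f y\<bar> * \<bar>g y\<bar>"
    using abs_triangle_ineq[of "f x * (g x - g y)" "(f x - f y) * g y"] by (simp add: abs_mult)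
  also have "\<dots> \<le> A * (L * dist x y) + (K * dist x y) * B"
    using lipschitz_onD[OF f xy] lipschitz_onD[OF g xy] A B xy
    by (intro add_mono mult_mono) (simp_all add: dist_real_def)
  finally show "dist (f x * g x) (f y * g y) \<le> (A * L + B * K) * dist x y"
    by (simp add: dist_real_def algebra_simps)
qed

lemma lipschitz_on_suminf:
  fixes f :: "nat \<Rightarrow> 'a::metric_space \<Rightarrow> real"
  assumes L: "summable L" and f: "\<And>j. (L j)-lipschitz_on U (f j)"
    and sf: "\<And>x. x \<in> U \<Longrightarrow> summable (\<lambda>j. f j x)"
  shows "(\<Sum>j. L j)-lipschitz_on U (\<lambda>x. \<Sum>j. f j x)"
proof (rule lipschitz_onI)
  show "0 \<le> (\<Sum>j. L j)" using L f by (intro suminf_nonneg lipschitz_on_nonneg)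
  fix x y assume xy: "x \<in> U" "y \<in> U"
  have "dist (\<Sum>j. f j x) (\<Sum>j. f j y) = norm (\<Sum>j. f j x - f j y)"
    by (simp add: dist_real_def suminf_diff sf xy)
  also have "\<dots> \<le> (\<Sum>j. L j * dist x y)"
    by (intro norm_suminf_le summable_mult2 L)
      (simp add: lipschitz_onD[OF f xy, unfolded dist_real_def])
  also have "\<dots> = (\<Sum>j. L j) * dist x y" by (rule suminf_mult2[OF L, symmetric])
  finally show "dist (\<Sum>j. f j x) (\<Sum>j. f j y) \<le> (\<Sum>j. L j) * dist x y" .
qed

lemma summable_two_powr_shifted:
  assumes "0 < s"
  shows "summable (\<lambda>j::nat. 2 powr (- real (j + 3) * s))"
proof -
  have "summable (\<lambda>j::nat. (2 powr (- s)) ^ j)"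
    using assms by (intro summable_geometric) (simp add: powr_less_one)
  then have "summable (\<lambda>j::nat. 2 powr (- real j * s))"
    by (simp add: powr_power mult.commute)
  then show ?thesis by (rule summable_ignore_initial_segment)
qed

lemma u0_of_bounded:
  fixes \<phi> :: "real \<Rightarrow> real"
  assumes s: "0 < s" and bound: "\<And>x. \<bar>\<phi> x\<bar> \<le> B"
  shows "\<exists>M. \<forall>x. \<bar>u0_of s \<phi> x\<bar> \<le> M"
proof -
  define \<kappa> where "\<kappa> = \<bar>gamma_s s\<bar> * B / \<bar>\<phi> 0\<bar>"
  have "\<bar>u0_of s \<phi> x\<bar> \<le> (\<Sum>j. 2 powr (- real (j + 3) * s) * \<kappa>)" for x
    unfolding u0_of_def real_norm_def[symmetric]
  proof (intro norm_suminf_le summable_mult2 summable_two_powr_shifted s)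
    fix j
    have "\<bar>\<phi> x\<bar> * \<bar>cos (11 / 8 * 2 ^ (j + 3) * x)\<bar> \<le> B * 1"
      using bound[of x] by (intro mult_mono) auto
    then show "norm (2 powr (- real (j + 3) * s) * (gamma_s s * \<phi> x / \<phi> 0) * cos (11 / 8 * 2 ^ (j + 3) * x))
        \<le> 2 powr (- real (j + 3) * s) * \<kappa>"
      by (simp add: \<kappa>_def abs_mult divide_right_mono mult_left_mono mult.assoc)
  qed
  then show ?thesis by blast
qed

lemma lipschitz_u0_of:
  fixes \<phi> :: "real \<Rightarrow> real"
  assumes s: "1 < s" and bound: "\<And>x. \<bar>\<phi> x\<bar> \<le> B" and lip: "K-lipschitz_on UNIV \<phi>"
  shows "\<exists>L. L-lipschitz_on UNIV (u0_of s \<phi>)"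
proof -
  define w where "w j = 2 powr (- real (j + 3) * s)" for j :: nat
  define a :: "nat \<Rightarrow> real" where "a j = 11 / 8 * 2 ^ (j + 3)" for j
  define \<kappa> where "\<kappa> = gamma_s s / \<phi> 0"
  have B: "0 \<le> B" using bound[of 0] by linarith
  have w: "summable w" unfolding w_def using s by (intro summable_two_powr_shifted) simp
  have "summable (\<lambda>j. 11 / 8 * 2 powr (- real (j + 3) * (s - 1)))"
    using s by (intro summable_mult summable_two_powr_shifted) simp
  moreover have "w j * a j = 11 / 8 * 2 powr (- real (j + 3) * (s - 1))" for j
    by (simp add: w_def a_def powr_realpow[symmetric] algebra_simps flip: powr_add)
  ultimately have wa: "summable (\<lambda>j. w j * a j)" by (simp only:)
  have "\<bar>a j\<bar>-lipschitz_on UNIV (\<lambda>x. cos (a j * x))" for j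
    using lipschitz_on_compose2[OF lipschitz_on_cmult_real[OF lipschitz_on_id] lipschitz_on_cos]
    by simp
  then have "(\<bar>w j * \<kappa>\<bar> * (B * \<bar>a j\<bar> + 1 * K))-lipschitz_on UNIV
      (\<lambda>x. w j * \<kappa> * (\<phi> x * cos (a j * x)))" for j
    by (intro lipschitz_on_cmult_real lipschitz_on_mult_bounded lip B bound) auto
  moreover have "summable (\<lambda>j. \<bar>w j * \<kappa>\<bar> * (B * \<bar>a j\<bar> + 1 * K))"
    using summable_add[OF summable_mult[OF wa, of "\<bar>\<kappa>\<bar> * B"] summable_mult[OF w, of "\<bar>\<kappa>\<bar> * K"]]
    by (simp add: w_def a_def abs_mult algebra_simps)
  moreover have "summable (\<lambda>j. w j * \<kappa> * (\<phi> x * cos (a j * x)))" for x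
  proof (rule summable_comparison_test'[OF summable_mult2[OF w, of "\<bar>\<kappa>\<bar> * B"]])
    fix j
    have "\<bar>\<phi> x\<bar> * \<bar>cos (a j * x)\<bar> \<le> B * 1"
      using bound[of x] by (intro mult_mono) auto
    then show "norm (w j * \<kappa> * (\<phi> x * cos (a j * x))) \<le> w j * (\<bar>\<kappa>\<bar> * B)"
      by (simp add: w_def abs_mult mult_left_mono mult.assoc)
  qed
  ultimately have "(\<Sum>j. \<bar>w j * \<kappa>\<bar> * (B * \<bar>a j\<bar> + 1 * K))-lipschitz_on UNIV
      (\<lambda>x. \<Sum>j. w j * \<kappa> * (\<phi> x * cos (a j * x)))"
    by (intro lipschitz_on_suminf)
  moreover have "u0_of s \<phi> = (\<lambda>x. \<Sum>j. w j * \<kappa> * (\<phi> x * cos (a j * x)))"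
    unfolding u0_of_def w_def a_def \<kappa>_def by (simp add: fun_eq_iff mult_ac)
  ultimately show ?thesis by auto
qed

lemma eventually_phase_small:
  "eventually (\<lambda>n. pi * \<bar>8 / 11 * pi * real n * 2 powr (- real n)\<bar> * L
    + 1 / (2 * (11 / 8 * 2 ^ n)) \<le> 1 / 2) sequentially"
  by real_asymp

theorem lemma3p4:
  fixes p s c :: real and ph :: "real \<Rightarrow> real"
  assumes "1 \<le> p" and "s > 1 + 1 / p"
    and "admissible_bump ph" and "c > 0"
  shows "\<exists>C::real. \<exists>N::nat. \<forall>n\<ge>N. n \<ge> 1 \<longrightarrow> (\<forall>t\<in>{0..1::real}.
      Lp_norm lborel p (\<lambda>x. phi_of c ph (x - t * u0_of s (phi_of c ph) x)) \<le> ereal C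
    \<and> Lp_norm (restrict_space lborel {0..2 * pi}) p
        (\<lambda>x. cos (11 / 8 * 2 ^ n * (x - (8 / 11 * pi * real n * 2 powr (- real n))
                                      * u0_of s (phi_of c ph) x))) \<ge> 1 / 4)"
proof -
  note p = assms(1) and adm = assms(3)
  have c: "c \<ge> 0" using assms(4) by simp
  have "0 < 1 / p" using p by simp
  then have s: "s > 1" using assms(2) by linarith
  let ?\<Phi> = "phi_of c ph"
  obtain A where decay: "\<And>y. \<bar>?\<Phi> y\<bar> * (1 + y\<^sup>2) \<le> A"
    using phi_of_decay[OF adm c] by blast
  obtain M where M: "\<And>x. \<bar>u0_of s ?\<Phi> x\<bar> \<le> M"
    using u0_of_bounded[OF _ abs_phi_of_le[OF adm c]] s by force
  obtain L where L: "L-lipschitz_on UNIV (u0_of s ?\<Phi>)"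
    using lipschitz_u0_of[OF s abs_phi_of_le[OF adm c] lipschitz_phi_of[OF adm c]] by blast
  obtain N where N: "\<And>n. n \<ge> N \<Longrightarrow>
      pi * \<bar>8 / 11 * pi * real n * 2 powr (- real n)\<bar> * L + 1 / (2 * (11 / 8 * 2 ^ n)) \<le> 1 / 2"
    using eventually_phase_small[of L] by (auto simp: eventually_sequentially)
  show ?thesis
  proof (intro exI allI impI ballI conjI)
    fix n :: nat and t :: real assume n: "N \<le> n" and t: "t \<in> {0..1}"
    have "\<bar>t * u0_of s ?\<Phi> x\<bar> \<le> M" for x
      using t order_trans[OF _ M[of x]] by (simp add: abs_mult mult_left_le_one_le)
    then show "Lp_norm lborel p (\<lambda>x. ?\<Phi> (x - t * u0_of s ?\<Phi> x))
        \<le> ereal ((2 * ?\<Phi> 0 powr (p - 1) * A * (1 + M\<^sup>2) * pi) powr (1 / p))"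
      by (intro Lp_norm_shift_le[OF p abs_phi_of_le[OF adm c] decay])
    have "ereal (1 / 2) \<le> Lp_norm (restrict_space lborel {0..2 * pi}) p
        (\<lambda>x. cos (11 / 8 * 2 ^ n * (x - (8 / 11 * pi * real n * 2 powr (- real n)) * u0_of s ?\<Phi> x)))"
      using p by (intro Lp_norm_cos_phase_ge_half[OF _ _ L N[OF n]]) auto
    moreover have "(1 / 4 :: ereal) \<le> ereal (1 / 2)" by (simp add: one_ereal_def ereal_divide)
    ultimately show "1 / 4 \<le> Lp_norm (restrict_space lborel {0..2 * pi}) p
        (\<lambda>x. cos (11 / 8 * 2 ^ n * (x - (8 / 11 * pi * real n * 2 powr (- real n)) * u0_of s ?\<Phi> x)))"
      by (rule order_trans[rotated])
  qed
qed

end
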